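(* A ring $R$ with identity is semisimple if and only if the free right $R$-module $R_R^{(\mathbb{N})}$ has the SSP.
   Context: Rings are associative with identity and modules are unitary. $R_R^{(\mathbb{N})}$ denotes the direct sum of countably many copies of $R_R$. A module $M$ has the summand sum property (SSP) if the sum of any two direct summands of $M$ is again a direct summand of $M$. *)

theory Defs
  imports Main "HOL-Library.Function_Algebras"
begin

text \<open>Right modules are given by an abelian group
  type together with a carrier set M and a right scalar action act.\<close>

definition rsubmodule :: "'m::ab_group_add set \<Rightarrow> ('m \<Rightarrow> 'a::ring_1 \<Rightarrow> 'm) \<Rightarrow> 'm set \<Rightarrow> bool" where
  "rsubmodule M act S \<longleftrightarrow> S \<subseteq> M \<and> 0 \<in> S \<and>
     (\<forall>x\<in>S. \<forall>y\<in>S. x + y \<in> S) \<and> (\<forall>x\<in>S. - x \<in> S) \<and>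
     (\<forall>x\<in>S. \<forall>r. act x r \<in> S)"

definition sum_sets :: "'m::ab_group_add set \<Rightarrow> 'm set \<Rightarrow> 'm set" where
  "sum_sets S T = {x + y | x y. x \<in> S \<and> y \<in> T}"

definition direct_summand :: "'m::ab_group_add set \<Rightarrow> ('m \<Rightarrow> 'a::ring_1 \<Rightarrow> 'm) \<Rightarrow> 'm set \<Rightarrow> bool" where
  "direct_summand M act S \<longleftrightarrow> rsubmodule M act S \<and>
     (\<exists>T. rsubmodule M act T \<and> S \<inter> T = {0} \<and> sum_sets S T = M)"

definition SSP :: "'m::ab_group_add set \<Rightarrow> ('m \<Rightarrow> 'a::ring_1 \<Rightarrow> 'm) \<Rightarrow> bool" where
  "SSP M act \<longleftrightarrow> (\<forall>S T. direct_summand M act S \<and> direct_summand M act T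
                      \<longrightarrow> direct_summand M act (sum_sets S T))"

text \<open>A ring R is semisimple iff R_R is a semisimple module, i.e. every
  submodule of R_R (right ideal) is a direct summand of R_R.\<close>
definition semisimple_ring :: "'a::ring_1 itself \<Rightarrow> bool" where
  "semisimple_ring _ \<longleftrightarrow>
     (\<forall>I::'a set. rsubmodule UNIV (\<lambda>x r. x * r) I \<longrightarrow> direct_summand UNIV (\<lambda>x r. x * r) I)"

text \<open>The free right module R_R^(N): finitely supported sequences, with right action.\<close>
definition free_countable :: "(nat \<Rightarrow> 'a::ring_1) set" where
  "free_countable = {x. finite {n. x n \<noteq> 0}}"

definition rsmult :: "(nat \<Rightarrow> 'a::ring_1) \<Rightarrow> 'a \<Rightarrow> (nat \<Rightarrow> 'a)" where
  "rsmult x r = (\<lambda>n. x n * r)"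

end

theory Submission
  imports Defs
begin

text \<open>
  If \<open>R\<close> is semisimple, every submodule \<open>N\<close> of the free module of finitely supported
  sequences is a direct summand: the leading coefficients of the elements of \<open>N\<close> supported
  in \<open>{0..m}\<close> form a right ideal \<open>J\<^sub>m\<close>; for complements \<open>K\<^sub>m\<close>, the sequences whose \<open>m\<close>-th entry
  lies in \<open>K\<^sub>m\<close> for all \<open>m\<close> complement \<open>N\<close> (a nonzero element of \<open>N\<close> has its leading
  coefficient in some \<open>J\<^sub>m\<close>; spanning is an induction on the support). In particular sums of
  summands are summands.

  Conversely, for a sequence \<open>a\<close> in \<open>R\<close> the kernels of \<open>x \<mapsto> x\<^sub>0\<close> and of
  \<open>x \<mapsto> x\<^sub>0 - \<Sum> a\<^sub>i x\<^sub>i\<^sub>+\<^sub>1\<close> are summands (both complemented by \<open>e\<^sub>0R\<close>), and their sum consists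
  of the \<open>x\<close> with \<open>x\<^sub>0\<close> in the right ideal generated by \<open>a\<close>. Under SSP this sum is a summand,
  and evaluation at \<open>0\<close> turns its complement into a complement of that right ideal. Writing
  \<open>1 = e + k\<close> accordingly, \<open>a\<^sub>n = e a\<^sub>n\<close> lies in the ideal generated by finitely many \<open>a\<^sub>i\<close>,
  so no sequence can escape the ideals generated by its predecessors; hence every right ideal is
  generated by a sequence, and thus is a summand.
\<close>

abbreviation right_ideal :: "'a::ring_1 set \<Rightarrow> bool" where
  "right_ideal I \<equiv> rsubmodule UNIV (\<lambda>x r. x * r) I"

lemma rsubmoduleI:
  assumes "S \<subseteq> M" "0 \<in> S" "\<And>x y. x \<in> S \<Longrightarrow> y \<in> S \<Longrightarrow> x + y \<in> S"
    "\<And>x. x \<in> S \<Longrightarrow> - x \<in> S" "\<And>x r. x \<in> S \<Longrightarrow> act x r \<in> S"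
  shows "rsubmodule M act S"
  using assms by (simp add: rsubmodule_def)

lemma rsubmoduleD:
  assumes "rsubmodule M act S"
  shows "S \<subseteq> M" "0 \<in> S" "\<And>x y. x \<in> S \<Longrightarrow> y \<in> S \<Longrightarrow> x + y \<in> S"
    "\<And>x. x \<in> S \<Longrightarrow> - x \<in> S" "\<And>x r. x \<in> S \<Longrightarrow> act x r \<in> S"
  using assms by (auto simp: rsubmodule_def)

lemma rsubmodule_diff:
  "rsubmodule M act S \<Longrightarrow> x \<in> S \<Longrightarrow> y \<in> S \<Longrightarrow> x - y \<in> S"
  by (metis rsubmoduleD(3,4) diff_conv_add_uminus)

lemma rsubmodule_Int:
  "rsubmodule M act S \<Longrightarrow> rsubmodule M act T \<Longrightarrow> rsubmodule M act (S \<inter> T)"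
  by (auto simp: rsubmodule_def)

lemma rsubmodule_image:
  assumes S: "rsubmodule M act S" and into: "f ` S \<subseteq> M'" and zero: "f 0 = 0"
    and add: "\<And>x y. x \<in> S \<Longrightarrow> y \<in> S \<Longrightarrow> f (x + y) = f x + f y"
    and uminus: "\<And>x. x \<in> S \<Longrightarrow> f (- x) = - f x"
    and act: "\<And>x r. x \<in> S \<Longrightarrow> f (act x r) = act' (f x) r"
  shows "rsubmodule M' act' (f ` S)"
proof (rule rsubmoduleI[OF into])
  show "0 \<in> f ` S" using rsubmoduleD(2)[OF S] zero by force
next
  fix u v assume "u \<in> f ` S" "v \<in> f ` S"
  then obtain x y where xy: "x \<in> S" "y \<in> S" and "u = f x" "v = f y" by blast
  then have "u + v = f (x + y)" using add by simp
  then show "u + v \<in> f ` S" using rsubmoduleD(3)[OF S xy] by blast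
next
  fix u assume "u \<in> f ` S"
  then obtain x where x: "x \<in> S" and "u = f x" by blast
  then have "- u = f (- x)" using uminus by simp
  then show "- u \<in> f ` S" using rsubmoduleD(4)[OF S x] by blast
next
  fix u r assume "u \<in> f ` S"
  then obtain x where x: "x \<in> S" and "u = f x" by blast
  then have "act' u r = f (act x r)" using act by simp
  then show "act' u r \<in> f ` S" using rsubmoduleD(5)[OF S x] by blast
qed

lemma sum_sets_subset:
  "rsubmodule M act M \<Longrightarrow> S \<subseteq> M \<Longrightarrow> T \<subseteq> M \<Longrightarrow> sum_sets S T \<subseteq> M"
  unfolding sum_sets_def by (auto intro: rsubmoduleD(3))

lemma rsubmodule_sum_sets:
  assumes M: "rsubmodule M act M"
    and act_add: "\<And>x y r. x \<in> M \<Longrightarrow> y \<in> M \<Longrightarrow> act (x + y) r = act x r + act y r"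
    and S: "rsubmodule M act S" and T: "rsubmodule M act T"
  shows "rsubmodule M act (sum_sets S T)"
proof (rule rsubmoduleI)
  show "sum_sets S T \<subseteq> M"
    using sum_sets_subset[OF M rsubmoduleD(1)[OF S] rsubmoduleD(1)[OF T]] .
  have "0 = 0 + (0 :: 'a)" by simp
  then show "0 \<in> sum_sets S T"
    unfolding sum_sets_def using rsubmoduleD(2)[OF S] rsubmoduleD(2)[OF T] by blast
next
  fix x y assume "x \<in> sum_sets S T" "y \<in> sum_sets S T"
  then obtain s t s' t' where st: "s \<in> S" "t \<in> T" "s' \<in> S" "t' \<in> T"
    and "x = s + t" "y = s' + t'"
    unfolding sum_sets_def by blast
  then have "x + y = (s + s') + (t + t')" by (simp add: algebra_simps)
  then show "x + y \<in> sum_sets S T"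
    unfolding sum_sets_def using rsubmoduleD(3)[OF S st(1,3)] rsubmoduleD(3)[OF T st(2,4)] by blast
next
  fix x assume "x \<in> sum_sets S T"
  then obtain s t where st: "s \<in> S" "t \<in> T" and "x = s + t" unfolding sum_sets_def by blast
  then have "- x = - s + - t" by simp
  then show "- x \<in> sum_sets S T"
    unfolding sum_sets_def using rsubmoduleD(4)[OF S st(1)] rsubmoduleD(4)[OF T st(2)] by blast
next
  fix x r assume "x \<in> sum_sets S T"
  then obtain s t where st: "s \<in> S" "t \<in> T" and "x = s + t" unfolding sum_sets_def by blast
  then have "act x r = act s r + act t r"
    using act_add rsubmoduleD(1)[OF S] rsubmoduleD(1)[OF T] by blast
  then show "act x r \<in> sum_sets S T"
    unfolding sum_sets_def using rsubmoduleD(5)[OF S st(1)] rsubmoduleD(5)[OF T st(2)] by blast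
qed

lemma direct_summandI:
  assumes M: "rsubmodule M act M" and S: "rsubmodule M act S" and T: "rsubmodule M act T"
    and disjoint: "S \<inter> T \<subseteq> {0}" and spanning: "M \<subseteq> sum_sets S T"
  shows "direct_summand M act S"
proof -
  have "S \<inter> T = {0}" using disjoint rsubmoduleD(2)[OF S] rsubmoduleD(2)[OF T] by blast
  moreover have "sum_sets S T = M"
    using spanning sum_sets_subset[OF M rsubmoduleD(1)[OF S] rsubmoduleD(1)[OF T]] by blast
  ultimately show ?thesis unfolding direct_summand_def using S T by blast
qed

definition bounded_seqs :: "nat \<Rightarrow> (nat \<Rightarrow> 'a::ring_1) set" where
  "bounded_seqs n = {x. \<forall>j>n. x j = 0}"

definition single_seq :: "nat \<Rightarrow> 'a::ring_1 \<Rightarrow> nat \<Rightarrow> 'a" where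
  "single_seq n c = (\<lambda>j. if j = n then c else 0)"

lemma free_countable_iff: "x \<in> free_countable \<longleftrightarrow> (\<exists>n. x \<in> bounded_seqs n)"
proof
  assume "x \<in> free_countable"
  then obtain n where "\<forall>j\<in>{j. x j \<noteq> 0}. j \<le> n"
    unfolding free_countable_def using finite_nat_set_iff_bounded_le by blast
  then have "x \<in> bounded_seqs n" unfolding bounded_seqs_def by force
  then show "\<exists>n. x \<in> bounded_seqs n" ..
next
  assume "\<exists>n. x \<in> bounded_seqs n"
  then obtain n where "\<forall>j>n. x j = 0" unfolding bounded_seqs_def by blast
  then have "{j. x j \<noteq> 0} \<subseteq> {..n}" using not_le by blast
  then show "x \<in> free_countable" unfolding free_countable_def using finite_subset by blast
qed

lemma rsubmodule_bounded_seqs: "rsubmodule free_countable rsmult (bounded_seqs n)"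
proof (rule rsubmoduleI)
  show "bounded_seqs n \<subseteq> free_countable" using free_countable_iff by blast
qed (auto simp: bounded_seqs_def rsmult_def)

lemma rsubmodule_free_countable: "rsubmodule free_countable rsmult free_countable"
proof (rule rsubmoduleI)
  fix x y :: "nat \<Rightarrow> 'a" assume "x \<in> free_countable" "y \<in> free_countable"
  then obtain n m where "x \<in> bounded_seqs n" "y \<in> bounded_seqs m"
    unfolding free_countable_iff by blast
  then have "x + y \<in> bounded_seqs (max n m)" by (simp add: bounded_seqs_def)
  then show "x + y \<in> free_countable" unfolding free_countable_iff by blast
next
  fix x :: "nat \<Rightarrow> 'a" and r assume "x \<in> free_countable"
  then obtain n where "x \<in> bounded_seqs n" unfolding free_countable_iff by blast
  then have "rsmult x r \<in> bounded_seqs n" using rsubmoduleD(5)[OF rsubmodule_bounded_seqs] by blast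
  then show "rsmult x r \<in> free_countable" unfolding free_countable_iff by blast
next
  fix x :: "nat \<Rightarrow> 'a" assume "x \<in> free_countable"
  then obtain n where "x \<in> bounded_seqs n" unfolding free_countable_iff by blast
  then have "- x \<in> bounded_seqs n" by (simp add: bounded_seqs_def)
  then show "- x \<in> free_countable" unfolding free_countable_iff by blast
qed (auto simp: free_countable_def)

lemma rsmult_add: "rsmult (x + y) r = rsmult x r + rsmult y r"
  by (simp add: rsmult_def fun_eq_iff distrib_right)

lemma rsubmodule_sum_sets_free:
  assumes "rsubmodule free_countable rsmult S" "rsubmodule free_countable rsmult T"
  shows "rsubmodule free_countable rsmult (sum_sets S T)"
  by (rule rsubmodule_sum_sets[OF rsubmodule_free_countable _ assms]) (rule rsmult_add)

lemma single_seq_in_bounded_seqs: "single_seq n c \<in> bounded_seqs n"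
  by (simp add: single_seq_def bounded_seqs_def)

lemma single_seq_in_free_countable: "single_seq n c \<in> free_countable"
  using single_seq_in_bounded_seqs free_countable_iff by blast

lemma right_ideal_eval_image:
  assumes "rsubmodule free_countable rsmult S"
  shows "right_ideal ((\<lambda>x. x m) ` S)"
  by (rule rsubmodule_image[OF assms]) (simp_all add: rsmult_def)

definition leading_ideal :: "(nat \<Rightarrow> 'a::ring_1) set \<Rightarrow> nat \<Rightarrow> 'a set" where
  "leading_ideal N m = (\<lambda>y. y m) ` (N \<inter> bounded_seqs m)"

definition leading_complement :: "(nat \<Rightarrow> 'a::ring_1 set) \<Rightarrow> (nat \<Rightarrow> 'a) set" where
  "leading_complement K = {x \<in> free_countable. \<forall>m. x m \<in> K m}"

lemma right_ideal_leading_ideal: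
  "rsubmodule free_countable rsmult N \<Longrightarrow> right_ideal (leading_ideal N m)"
  unfolding leading_ideal_def
  by (intro right_ideal_eval_image rsubmodule_Int rsubmodule_bounded_seqs)

lemma rsubmodule_leading_complement:
  assumes K: "\<And>m. right_ideal (K m)"
  shows "rsubmodule free_countable rsmult (leading_complement K)"
proof (rule rsubmoduleI)
  fix x y assume "x \<in> leading_complement K" "y \<in> leading_complement K"
  then have "x + y \<in> free_countable" "(x + y) m \<in> K m" for m
    unfolding leading_complement_def
    using rsubmoduleD(3)[OF rsubmodule_free_countable] rsubmoduleD(3)[OF K] by auto
  then show "x + y \<in> leading_complement K" unfolding leading_complement_def by blast
next
  fix x assume "x \<in> leading_complement K"
  then have "- x \<in> free_countable" "(- x) m \<in> K m" for m
    unfolding leading_complement_def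
    using rsubmoduleD(4)[OF rsubmodule_free_countable] rsubmoduleD(4)[OF K] by auto
  then show "- x \<in> leading_complement K" unfolding leading_complement_def by blast
next
  fix x r assume "x \<in> leading_complement K"
  then have "rsmult x r \<in> free_countable" "rsmult x r m \<in> K m" for m
    unfolding leading_complement_def
    using rsubmoduleD(5)[OF rsubmodule_free_countable, of x r] rsubmoduleD(5)[OF K]
    by (auto simp: rsmult_def)
  then show "rsmult x r \<in> leading_complement K" unfolding leading_complement_def by blast
qed (use rsubmoduleD(2)[OF rsubmodule_free_countable] rsubmoduleD(2)[OF K] in
  \<open>auto simp: leading_complement_def\<close>)

lemma leading_complement_Int:
  assumes N: "N \<subseteq> free_countable" and disjoint: "\<And>m. leading_ideal N m \<inter> K m \<subseteq> {0}"
  shows "N \<inter> leading_complement K \<subseteq> {0}"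
proof
  fix y assume y: "y \<in> N \<inter> leading_complement K"
  show "y \<in> {0}"
  proof (rule ccontr)
    assume "y \<notin> {0}"
    then have nonempty: "{n. y n \<noteq> 0} \<noteq> {}" by auto
    have finite: "finite {n. y n \<noteq> 0}" using y N unfolding free_countable_def by blast
    define m where "m = Max {n. y n \<noteq> 0}"
    have "y m \<noteq> 0" using Max_in[OF finite nonempty] m_def by simp
    moreover have "y \<in> bounded_seqs m"
      unfolding bounded_seqs_def m_def using Max_ge[OF finite] not_le by blast
    then have "y m \<in> leading_ideal N m" unfolding leading_ideal_def using y by blast
    moreover have "y m \<in> K m" using y unfolding leading_complement_def by blast
    ultimately show False using disjoint[of m] by blast
  qed
qed

lemma leading_complement_spanning:
  assumes N: "rsubmodule free_countable rsmult N" and K: "\<And>m. right_ideal (K m)"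
    and spanning: "\<And>m. sum_sets (leading_ideal N m) (K m) = UNIV"
  shows "\<forall>j\<ge>n. x j = 0 \<Longrightarrow> x \<in> sum_sets N (leading_complement K)"
proof (induction n arbitrary: x)
  case 0
  then have "x = 0 + 0" by auto
  moreover have "0 \<in> leading_complement K"
    using rsubmoduleD(2)[OF rsubmodule_leading_complement[OF K]] .
  ultimately show ?case unfolding sum_sets_def using rsubmoduleD(2)[OF N] by blast
next
  case (Suc n)
  obtain l k where "l \<in> leading_ideal N n" and k: "k \<in> K n" and xn: "x n = l + k"
    using spanning[of n] unfolding sum_sets_def by blast
  then obtain y where y: "y \<in> N" "y \<in> bounded_seqs n" and l: "l = y n"
    unfolding leading_ideal_def by blast
  \<comment> \<open>Removing \<open>y\<close> and a correction in \<open>K n\<close> at position \<open>n\<close> clears the \<open>n\<close>-th entry.\<close>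
  have "(x - y - single_seq n k) j = 0" if "n \<le> j" for j
  proof (cases "j = n")
    case False
    then show ?thesis using that Suc.prems y(2) by (simp add: bounded_seqs_def single_seq_def)
  qed (simp add: xn l single_seq_def)
  then obtain a c where a: "a \<in> N" and c: "c \<in> leading_complement K"
    and decomp: "x - y - single_seq n k = a + c"
    using Suc.IH[of "x - y - single_seq n k"] unfolding sum_sets_def by blast
  have "a + y \<in> N" using rsubmoduleD(3)[OF N a y(1)] .
  moreover have "c + single_seq n k \<in> leading_complement K"
  proof -
    have "c + single_seq n k \<in> free_countable"
      using c rsubmoduleD(3)[OF rsubmodule_free_countable _ single_seq_in_free_countable]
      unfolding leading_complement_def by blast
    moreover have "(c + single_seq n k) m \<in> K m" for m
      using c k rsubmoduleD(3)[OF K] unfolding leading_complement_def single_seq_def by simp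
    ultimately show ?thesis unfolding leading_complement_def by blast
  qed
  moreover have "x = (a + y) + (c + single_seq n k)"
    using decomp by (simp add: algebra_simps)
  ultimately show ?case unfolding sum_sets_def by blast
qed

lemma semisimple_free_submodule_summand:
  assumes semisimple: "semisimple_ring TYPE('a::ring_1)"
    and N: "rsubmodule (free_countable :: (nat \<Rightarrow> 'a) set) rsmult N"
  shows "direct_summand free_countable rsmult N"
proof -
  have "\<forall>m. \<exists>K. right_ideal K \<and> leading_ideal N m \<inter> K = {0}
      \<and> sum_sets (leading_ideal N m) K = UNIV"
    using semisimple right_ideal_leading_ideal[OF N]
    unfolding semisimple_ring_def direct_summand_def by blast
  then obtain K where K: "\<And>m. right_ideal (K m)" and disjoint: "\<And>m. leading_ideal N m \<inter> K m = {0}"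
    and spanning: "\<And>m. sum_sets (leading_ideal N m) (K m) = UNIV"
    by metis
  show ?thesis
  proof (rule direct_summandI[OF rsubmodule_free_countable N rsubmodule_leading_complement[OF K]])
    show "N \<inter> leading_complement K \<subseteq> {0}"
      using leading_complement_Int[OF rsubmoduleD(1)[OF N]] disjoint by blast
    show "free_countable \<subseteq> sum_sets N (leading_complement K)"
    proof
      fix x :: "nat \<Rightarrow> 'a" assume "x \<in> free_countable"
      then obtain n where "x \<in> bounded_seqs n" unfolding free_countable_iff by blast
      then have "\<forall>j\<ge>Suc n. x j = 0" by (simp add: bounded_seqs_def)
      then show "x \<in> sum_sets N (leading_complement K)"
        by (rule leading_complement_spanning[OF N K spanning])
    qed
  qed
qed

definition right_span :: "(nat \<Rightarrow> 'a::ring_1) \<Rightarrow> 'a set" where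
  "right_span a = {\<Sum>i<n. a i * r i | n r. True}"

lemma right_spanI: "(\<Sum>i<n. a i * r i) \<in> right_span a"
  unfolding right_span_def by blast

lemma sum_lessThan_extend:
  fixes a r :: "nat \<Rightarrow> 'a::ring_1"
  assumes "n \<le> m"
  shows "(\<Sum>i<n. a i * r i) = (\<Sum>i<m. a i * (if i < n then r i else 0))"
proof -
  have "(\<Sum>i<m. a i * (if i < n then r i else 0)) = (\<Sum>i<n. a i * (if i < n then r i else 0))"
    by (rule sum.mono_neutral_right) (use assms in auto)
  then show ?thesis by simp
qed

lemma right_ideal_right_span: "right_ideal (right_span a)"
proof (rule rsubmoduleI)
  show "0 \<in> right_span a" using right_spanI[of a 0] by simp
next
  fix x y assume "x \<in> right_span a" "y \<in> right_span a"
  then obtain n r m s where x: "x = (\<Sum>i<n. a i * r i)" and y: "y = (\<Sum>i<m. a i * s i)"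
    unfolding right_span_def by blast
  have "x + y = (\<Sum>i<max n m. a i * (if i < n then r i else 0))
      + (\<Sum>i<max n m. a i * (if i < m then s i else 0))"
    unfolding x y using sum_lessThan_extend[of n "max n m" a r] sum_lessThan_extend[of m "max n m" a s]
    by simp
  also have "\<dots> = (\<Sum>i<max n m. a i * ((if i < n then r i else 0) + (if i < m then s i else 0)))"
    by (simp add: sum.distrib distrib_left)
  finally have "x + y = \<dots>" .
  then show "x + y \<in> right_span a" using right_spanI by metis
next
  fix x assume "x \<in> right_span a"
  then obtain n r where "x = (\<Sum>i<n. a i * r i)" unfolding right_span_def by blast
  then have "- x = (\<Sum>i<n. a i * - r i)" by (simp add: sum_negf)
  then show "- x \<in> right_span a" using right_spanI by metis
next
  fix x s assume "x \<in> right_span a"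
  then obtain n r where "x = (\<Sum>i<n. a i * r i)" unfolding right_span_def by blast
  then have "x * s = (\<Sum>i<n. a i * (r i * s))" by (simp add: sum_distrib_right mult.assoc)
  then show "x * s \<in> right_span a" using right_spanI by metis
qed simp

lemma right_span_mem: "a m \<in> right_span a"
proof -
  have "(\<Sum>i<Suc m. a i * (if i = m then 1 else 0)) = a m"
    by (simp add: sum.delta)
  then show ?thesis using right_spanI by metis
qed

lemma right_span_subset:
  assumes "\<And>i. a i \<in> I" and I: "right_ideal I"
  shows "right_span a \<subseteq> I"
proof -
  have "(\<Sum>i<n. a i * r i) \<in> I" for n r
    by (induction n) (simp_all add: rsubmoduleD(2,3,5)[OF I] assms(1))
  then show ?thesis unfolding right_span_def by blast
qed

text \<open>The sum is taken up to the least support bound of \<open>x\<close>; by \<open>tail_combination_eq\<close>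
  any other support bound gives the same value.\<close>
definition tail_combination :: "(nat \<Rightarrow> 'a::ring_1) \<Rightarrow> (nat \<Rightarrow> 'a) \<Rightarrow> 'a" where
  "tail_combination a x = (\<Sum>i<(LEAST n. x \<in> bounded_seqs n). a i * x (Suc i))"

lemma tail_combination_eq:
  assumes "x \<in> bounded_seqs n"
  shows "tail_combination a x = (\<Sum>i<n. a i * x (Suc i))"
proof -
  define m where "m = (LEAST n. x \<in> bounded_seqs n)"
  have "m \<le> n" "x \<in> bounded_seqs m"
    unfolding m_def using Least_le LeastI assms by metis+
  then have "(\<Sum>i<n. a i * x (Suc i)) = (\<Sum>i<m. a i * x (Suc i))"
    by (intro sum.mono_neutral_right) (auto simp: bounded_seqs_def)
  then show ?thesis unfolding tail_combination_def m_def by simp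
qed

lemma tail_combination_add:
  assumes "x \<in> free_countable" "y \<in> free_countable"
  shows "tail_combination a (x + y) = tail_combination a x + tail_combination a y"
proof -
  obtain n m where "x \<in> bounded_seqs n" "y \<in> bounded_seqs m"
    using assms unfolding free_countable_iff by blast
  then have "x \<in> bounded_seqs (max n m)" "y \<in> bounded_seqs (max n m)"
    "x + y \<in> bounded_seqs (max n m)"
    by (auto simp: bounded_seqs_def)
  then show ?thesis by (simp add: tail_combination_eq sum.distrib distrib_left)
qed

lemma tail_combination_rsmult:
  assumes "x \<in> free_countable"
  shows "tail_combination a (rsmult x r) = tail_combination a x * r"
proof -
  obtain n where "x \<in> bounded_seqs n" using assms unfolding free_countable_iff by blast
  moreover from this have "rsmult x r \<in> bounded_seqs n"
    by (simp add: bounded_seqs_def rsmult_def)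
  ultimately show ?thesis
    by (simp add: tail_combination_eq rsmult_def sum_distrib_right mult.assoc)
qed

lemma tail_combination_single_seq_0: "tail_combination a (single_seq 0 c) = 0"
  using tail_combination_eq[OF single_seq_in_bounded_seqs, of a 0 c] by simp

lemma kernel_direct_summand:
  fixes \<phi> :: "(nat \<Rightarrow> 'a::ring_1) \<Rightarrow> 'a"
  assumes add: "\<And>x y. x \<in> free_countable \<Longrightarrow> y \<in> free_countable \<Longrightarrow> \<phi> (x + y) = \<phi> x + \<phi> y"
    and mult: "\<And>x r. x \<in> free_countable \<Longrightarrow> \<phi> (rsmult x r) = \<phi> x * r"
    and unit: "\<And>c. \<phi> (single_seq 0 c) = c"
  shows "direct_summand free_countable rsmult {x \<in> free_countable. \<phi> x = 0}"
    (is "direct_summand _ _ ?K")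
proof -
  note F = rsubmoduleD[OF rsubmodule_free_countable]
  have zero: "\<phi> 0 = 0" using add[OF F(2) F(2)] by simp
  have uminus: "\<phi> (- x) = - \<phi> x" if "x \<in> free_countable" for x
    using add[OF that F(4)[OF that]] zero by (simp add: add_eq_0_iff)
  have kernel: "rsubmodule free_countable rsmult ?K"
  proof (rule rsubmoduleI)
    fix x y assume "x \<in> ?K" "y \<in> ?K"
    then show "x + y \<in> ?K" by (simp add: F(3) add)
  next
    fix x assume "x \<in> ?K"
    then show "- x \<in> ?K" by (simp add: F(4) uminus)
  next
    fix x r assume "x \<in> ?K"
    then show "rsmult x r \<in> ?K" by (simp add: F(5) mult)
  qed (use F(2) zero in auto)
  show ?thesis
  proof (rule direct_summandI[OF rsubmodule_free_countable kernel rsubmodule_bounded_seqs])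
    show "?K \<inter> bounded_seqs 0 \<subseteq> {0}"
    proof
      fix x assume x: "x \<in> ?K \<inter> bounded_seqs 0"
      then have "x = single_seq 0 (x 0)" by (auto simp: bounded_seqs_def single_seq_def)
      then have "x 0 = \<phi> x" using unit by metis
      then have "x 0 = 0" using x by simp
      then show "x \<in> {0}" using \<open>x = single_seq 0 (x 0)\<close> by (simp add: single_seq_def zero_fun_def)
    qed
    show "free_countable \<subseteq> sum_sets ?K (bounded_seqs 0)"
    proof
      fix x :: "nat \<Rightarrow> 'a" assume x: "x \<in> free_countable"
      define s where "s = single_seq 0 (\<phi> x)"
      have s: "s \<in> free_countable" unfolding s_def by (rule single_seq_in_free_countable)
      have "x + - s \<in> free_countable" using F(3)[OF x F(4)[OF s]] .
      moreover have "\<phi> (x + - s) = 0" using add[OF x F(4)[OF s]] uminus[OF s] unit s_def by simp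
      moreover have "s \<in> bounded_seqs 0" unfolding s_def by (rule single_seq_in_bounded_seqs)
      moreover have "x = (x + - s) + s" by simp
      ultimately show "x \<in> sum_sets ?K (bounded_seqs 0)"
        unfolding sum_sets_def by blast
    qed
  qed
qed

text \<open>The second kernel is a graph over the coordinates \<open>1, 2, \<dots>\<close>; adding sequences
  that vanish at \<open>0\<close> leaves exactly the freedom of choosing the tail.\<close>
lemma sum_sets_kernels_eq:
  "sum_sets {x \<in> free_countable. x 0 = 0} {x \<in> free_countable. x 0 - tail_combination a x = 0}
    = {x \<in> free_countable. x 0 \<in> right_span a}"
  (is "sum_sets ?A ?T = ?P")
proof
  note F = rsubmoduleD[OF rsubmodule_free_countable]
  show "sum_sets ?A ?T \<subseteq> ?P"
  proof
    fix x assume "x \<in> sum_sets ?A ?T"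
    then obtain u t where u: "u \<in> ?A" and t: "t \<in> ?T" and x: "x = u + t"
      unfolding sum_sets_def by blast
    have "x 0 = tail_combination a t" using u t x by simp
    then have "x 0 \<in> right_span a" unfolding tail_combination_def using right_spanI by metis
    then show "x \<in> ?P" using u t x by (simp add: F(3))
  qed
  show "?P \<subseteq> sum_sets ?A ?T"
  proof
    fix x assume x: "x \<in> ?P"
    then obtain n r where x0: "x 0 = (\<Sum>i<n. a i * r i)" unfolding right_span_def by blast
    define t where "t k = (if k = 0 then x 0 else if k \<le> n then r (k - 1) else 0)" for k
    have bounded: "t \<in> bounded_seqs n" by (simp add: t_def bounded_seqs_def)
    then have "t \<in> free_countable" using free_countable_iff by blast
    moreover have "tail_combination a t = x 0"
      unfolding tail_combination_eq[OF bounded] x0 by (simp add: t_def)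
    ultimately have "t \<in> ?T" by (simp add: t_def)
    moreover have "x - t \<in> free_countable"
      using rsubmodule_diff[OF rsubmodule_free_countable] x \<open>t \<in> free_countable\<close> by blast
    then have "x - t \<in> ?A" by (simp add: t_def)
    moreover have "x = (x - t) + t" by simp
    ultimately show "x \<in> sum_sets ?A ?T" unfolding sum_sets_def by blast
  qed
qed

lemma right_ideal_UNIV: "right_ideal (UNIV :: 'a::ring_1 set)"
  by (simp add: rsubmodule_def)

lemma direct_summand_of_head_preimage:
  fixes I :: "'a::ring_1 set"
  assumes "direct_summand free_countable rsmult {x \<in> free_countable. x 0 \<in> I}"
  shows "direct_summand UNIV (\<lambda>x r. x * r) I"
proof -
  let ?P = "{x \<in> free_countable. x 0 \<in> I}"
  obtain D where P: "rsubmodule free_countable rsmult ?P" and D: "rsubmodule free_countable rsmult D"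
    and disjoint: "?P \<inter> D = {0}" and spanning: "sum_sets ?P D = free_countable"
    using assms unfolding direct_summand_def by blast
  have "I = (\<lambda>x. x 0) ` ?P"
  proof
    show "I \<subseteq> (\<lambda>x. x 0) ` ?P"
    proof
      fix c assume "c \<in> I"
      then have "single_seq 0 c \<in> ?P"
        using single_seq_in_free_countable[of 0 c] by (simp add: single_seq_def)
      moreover have "c = single_seq 0 c 0" by (simp add: single_seq_def)
      ultimately show "c \<in> (\<lambda>x. x 0) ` ?P" by blast
    qed
  qed blast
  then have I: "right_ideal I" using right_ideal_eval_image[OF P, of 0] by simp
  show ?thesis
  proof (rule direct_summandI[OF right_ideal_UNIV I right_ideal_eval_image[OF D, of 0]])
    show "I \<inter> (\<lambda>d. d 0) ` D \<subseteq> {0}"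
    proof
      fix c assume "c \<in> I \<inter> (\<lambda>d. d 0) ` D"
      then obtain d where d: "d \<in> D" "c = d 0" "d 0 \<in> I" by blast
      then have "d \<in> ?P \<inter> D" using rsubmoduleD(1)[OF D] by blast
      then show "c \<in> {0}" using disjoint d(2) by simp
    qed
    show "UNIV \<subseteq> sum_sets I ((\<lambda>d. d 0) ` D)"
    proof
      fix c :: 'a
      obtain u d where "u \<in> ?P" "d \<in> D" "single_seq 0 c = u + d"
        using spanning single_seq_in_free_countable unfolding sum_sets_def by blast
      then have "c = u 0 + d 0" "u 0 \<in> I" "d 0 \<in> (\<lambda>d. d 0) ` D"
        by (auto simp: single_seq_def fun_eq_iff dest: spec[of _ 0])
      then show "c \<in> sum_sets I ((\<lambda>d. d 0) ` D)" unfolding sum_sets_def by blast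
    qed
  qed
qed

lemma SSP_right_span_direct_summand:
  assumes "SSP (free_countable :: (nat \<Rightarrow> 'a::ring_1) set) rsmult"
  shows "direct_summand UNIV (\<lambda>x r. x * r) (right_span (a :: nat \<Rightarrow> 'a))"
proof (rule direct_summand_of_head_preimage)
  have "direct_summand free_countable rsmult {x \<in> free_countable. x 0 = (0::'a)}"
    by (rule kernel_direct_summand) (simp_all add: rsmult_def single_seq_def)
  moreover have "direct_summand free_countable rsmult
      {x \<in> free_countable. x 0 - tail_combination a x = 0}"
    by (rule kernel_direct_summand)
      (simp_all add: tail_combination_add tail_combination_rsmult tail_combination_single_seq_0,
       simp_all add: rsmult_def single_seq_def left_diff_distrib)
  ultimately show "direct_summand free_countable rsmult {x \<in> free_countable. x 0 \<in> right_span a}"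
    using assms unfolding SSP_def sum_sets_kernels_eq[symmetric] by blast
qed

lemma direct_summand_right_span_stabilizes:
  fixes a :: "nat \<Rightarrow> 'a::ring_1"
  assumes "direct_summand UNIV (\<lambda>x r. x * r) (right_span a)"
  shows "\<exists>n. a n \<in> right_span (\<lambda>i. if i < n then a i else 0)"
proof -
  obtain K where K: "right_ideal K" and disjoint: "right_span a \<inter> K = {0}"
    and spanning: "sum_sets (right_span a) K = UNIV"
    using assms unfolding direct_summand_def by blast
  obtain e k where e: "e \<in> right_span a" and k: "k \<in> K" and one: "1 = e + k"
    using spanning unfolding sum_sets_def by blast
  then obtain n r where e_def: "e = (\<Sum>i<n. a i * r i)" unfolding right_span_def by blast
  \<comment> \<open>\<open>k * a n\<close> lies in both summands, so \<open>e\<close> is a left identity on \<open>a n\<close>.\<close>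
  have decomp: "a n = e * a n + k * a n" using one by (metis distrib_right mult_1_left)
  then have "k * a n = a n - e * a n" by (simp add: algebra_simps)
  also have "\<dots> \<in> right_span a"
    using rsubmodule_diff[OF right_ideal_right_span right_span_mem
        rsubmoduleD(5)[OF right_ideal_right_span e]] .
  finally have "k * a n = 0" using disjoint rsubmoduleD(5)[OF K k] by blast
  then have "a n = (\<Sum>i<n. (if i < n then a i else 0) * (r i * a n))"
    using decomp by (simp add: e_def sum_distrib_right mult.assoc)
  then show ?thesis using right_spanI by metis
qed

lemma escaping_sequence:
  fixes I :: "'a::ring_1 set"
  assumes zero: "0 \<in> I"
    and escape: "\<forall>p. range p \<subseteq> I \<longrightarrow> (\<exists>b \<in> I. b \<notin> right_span p)"
  shows "\<exists>a :: nat \<Rightarrow> 'a. \<forall>n. a n \<notin> right_span (\<lambda>i. if i < n then a i else 0)"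
proof -
  \<comment> \<open>\<open>P n\<close> is the sequence of the first \<open>n\<close> chosen elements, padded with zeros.\<close>
  define next_elem where "next_elem p = (SOME b. b \<in> I \<and> b \<notin> right_span p)" for p
  have next_elem: "next_elem p \<in> I \<and> next_elem p \<notin> right_span p" if "range p \<subseteq> I" for p
  proof -
    have "\<exists>b. b \<in> I \<and> b \<notin> right_span p" using escape that by blast
    then show ?thesis unfolding next_elem_def by (rule someI_ex)
  qed
  define P where "P = rec_nat (\<lambda>_. 0) (\<lambda>n p. p(n := next_elem p))"
  have P_Suc: "P (Suc n) = (P n)(n := next_elem (P n))" for n
    by (simp add: P_def)
  have P_in_I: "P n i \<in> I" for n i
  proof (induction n arbitrary: i)
    case 0 then show ?case using zero by (simp add: P_def)
  next
    case (Suc n)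
    have "next_elem (P n) \<in> I" using next_elem Suc.IH by blast
    then show ?case using Suc.IH by (simp add: P_Suc)
  qed
  have next_elem_new: "next_elem (P n) \<notin> right_span (P n)" for n
    using next_elem P_in_I by blast
  define a where "a i = P (Suc i) i" for i
  have P_prefix: "P n = (\<lambda>i. if i < n then a i else 0)" for n
  proof (induction n)
    case 0 then show ?case by (simp add: P_def)
  next
    case (Suc n)
    show ?case
    proof
      fix i
      show "P (Suc n) i = (if i < Suc n then a i else 0)"
        using Suc.IH unfolding P_Suc a_def by (cases i n rule: linorder_cases) simp_all
    qed
  qed
  have "a n = next_elem (P n)" for n unfolding a_def P_Suc by simp
  then have "\<forall>n. a n \<notin> right_span (\<lambda>i. if i < n then a i else 0)"
    using next_elem_new unfolding P_prefix by simp
  then show ?thesis by (rule exI[of _ a])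
qed

lemma semisimple_if_right_spans_direct_summands:
  assumes "\<And>a :: nat \<Rightarrow> 'a::ring_1. direct_summand UNIV (\<lambda>x r. x * r) (right_span a)"
  shows "semisimple_ring TYPE('a)"
  unfolding semisimple_ring_def
proof (intro allI impI)
  fix I :: "'a set" assume I: "right_ideal I"
  show "direct_summand UNIV (\<lambda>x r. x * r) I"
  proof (cases "\<exists>a. right_span a = I")
    case True
    then obtain a where "right_span a = I" by blast
    then show ?thesis using assms[of a] by simp
  next
    case False
    have escape: "\<exists>b \<in> I. b \<notin> right_span p" if "range p \<subseteq> I" for p
    proof -
      have "right_span p \<subseteq> I" using right_span_subset[OF _ I] that by blast
      moreover have "right_span p \<noteq> I" using False by auto
      ultimately show ?thesis by blast
    qed
    have "\<exists>a :: nat \<Rightarrow> 'a. \<forall>n. a n \<notin> right_span (\<lambda>i. if i < n then a i else 0)"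
      by (rule escaping_sequence[OF rsubmoduleD(2)[OF I]]) (use escape in blast)
    then obtain a :: "nat \<Rightarrow> 'a" where escaping: "\<forall>n. a n \<notin> right_span (\<lambda>i. if i < n then a i else 0)"
      by blast
    moreover obtain n where "a n \<in> right_span (\<lambda>i. if i < n then a i else 0)"
      using direct_summand_right_span_stabilizes[OF assms[of a]] by blast
    ultimately show ?thesis by simp
  qed
qed

theorem corollary2p18:
  shows "semisimple_ring TYPE('a::ring_1) \<longleftrightarrow> SSP (free_countable :: (nat \<Rightarrow> 'a) set) rsmult"
proof
  assume "semisimple_ring TYPE('a::ring_1)"
  then show "SSP (free_countable :: (nat \<Rightarrow> 'a) set) rsmult"
    unfolding SSP_def
  proof (intro allI impI)
    fix S T :: "(nat \<Rightarrow> 'a) set"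
    assume "direct_summand free_countable rsmult S \<and> direct_summand free_countable rsmult T"
    then have "rsubmodule free_countable rsmult S" "rsubmodule free_countable rsmult T"
      unfolding direct_summand_def by simp_all
    then have "rsubmodule free_countable rsmult (sum_sets S T)"
      by (rule rsubmodule_sum_sets_free)
    then show "direct_summand free_countable rsmult (sum_sets S T)"
      by (rule semisimple_free_submodule_summand[OF \<open>semisimple_ring TYPE('a)\<close>])
  qed
next
  assume "SSP (free_countable :: (nat \<Rightarrow> 'a) set) rsmult"
  then show "semisimple_ring TYPE('a::ring_1)"
    by (intro semisimple_if_right_spans_direct_summands SSP_right_span_direct_summand)
qed

end
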